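(* There exists a dynamical system $(X,T)$ which is totally transitive and transitive compact but not weakly mixing.
   Context: A dynamical system $(X,T)$: $X$ is a compact metric space with more than one point and without isolated points, $T:X\to X$ a continuous surjection. "Opene" means open and nonempty. $N_T(U,V)=\{n\in\mathbb{Z}_+:U\cap T^{-n}V\neq\varnothing\}$. $(X,T)$ is transitive if $N_T(U,V)\ne\varnothing$ for all opene $U,V$; totally transitive if $(X,T^k)$ is transitive for every $k\in\mathbb{N}$; weakly mixing if $(X\times X,T\times T)$ is transitive. $\mathcal{N}_T$ is the family of all subsets of $\mathbb{Z}_+$ containing some $N_T(U,V)$ with $U,V$ opene; $\omega_{\mathcal{N}_T}(x)=\bigcap_{F\in\mathcal{N}_T}\overline{\{T^ix:i\in F\}}$. $(X,T)$ is transitive compact if $\omega_{\mathcal{N}_T}(x)\neq\varnothing$ for all $x\in X$. *)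

theory Defs
  imports "HOL-Analysis.Analysis"
begin

definition dyn_system :: "'a set \<Rightarrow> ('a \<Rightarrow> 'a \<Rightarrow> real) \<Rightarrow> ('a \<Rightarrow> 'a) \<Rightarrow> bool" where
  "dyn_system X d T \<longleftrightarrow>
     Metric_space X d \<and>
     compact_space (Metric_space.mtopology X d) \<and>
     (\<exists>x\<in>X. \<exists>y\<in>X. x \<noteq> y) \<and>
     (\<forall>x\<in>X. \<forall>U. openin (Metric_space.mtopology X d) U \<and> x \<in> U \<longrightarrow> (\<exists>y\<in>U. y \<noteq> x)) \<and>
     continuous_map (Metric_space.mtopology X d) (Metric_space.mtopology X d) T \<and>
     T ` X = X"

definition hit_times :: "('a \<Rightarrow> 'a) \<Rightarrow> 'a set \<Rightarrow> 'a set \<Rightarrow> nat set" where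
  "hit_times T U V = {n. \<exists>x\<in>U. (T ^^ n) x \<in> V}"

definition opene :: "'a topology \<Rightarrow> 'a set \<Rightarrow> bool" where
  "opene tp U \<longleftrightarrow> openin tp U \<and> U \<noteq> {}"

definition top_transitive :: "'a topology \<Rightarrow> ('a \<Rightarrow> 'a) \<Rightarrow> bool" where
  "top_transitive tp T \<longleftrightarrow>
     (\<forall>U V. opene tp U \<and> opene tp V \<longrightarrow> hit_times T U V \<noteq> {})"

definition totally_transitive :: "'a topology \<Rightarrow> ('a \<Rightarrow> 'a) \<Rightarrow> bool" where
  "totally_transitive tp T \<longleftrightarrow> (\<forall>k::nat. k \<ge> 1 \<longrightarrow> top_transitive tp (T ^^ k))"

definition weakly_mixing :: "'a topology \<Rightarrow> ('a \<Rightarrow> 'a) \<Rightarrow> bool" where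
  "weakly_mixing tp T \<longleftrightarrow>
     top_transitive (prod_topology tp tp) (\<lambda>(x, y). (T x, T y))"

definition hit_family :: "'a topology \<Rightarrow> ('a \<Rightarrow> 'a) \<Rightarrow> nat set set" where
  "hit_family tp T = {F. \<exists>U V. opene tp U \<and> opene tp V \<and> hit_times T U V \<subseteq> F}"

definition omega_family :: "'a topology \<Rightarrow> ('a \<Rightarrow> 'a) \<Rightarrow> 'a \<Rightarrow> 'a set" where
  "omega_family tp T x =
     (\<Inter>F\<in>hit_family tp T. tp closure_of {(T ^^ i) x | i. i \<in> F})"

definition transitive_compact :: "'a topology \<Rightarrow> ('a \<Rightarrow> 'a) \<Rightarrow> bool" where
  "transitive_compact tp T \<longleftrightarrow> (\<forall>x\<in>topspace tp. omega_family tp T x \<noteq> {})"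

end

theory Submission
  imports Defs
begin

text \<open>The example is a spacing shift: its points are the admissible sets \<open>S \<subseteq> \<nat>\<close>, those whose
  positive differences all lie in a fixed \<open>P\<close>, and \<open>T\<close> shifts \<open>S\<close> one step to the left. For \<open>P\<close> we take the
  positive integers \<open>\<Sum> e\<^sub>i b\<^sub>i\<close> with digits \<open>e\<^sub>i \<in> {-1,0,1}\<close> and \<open>b\<^sub>i = 10\<^sup>i\<^sup>+\<^sup>1 (i+1)! + 1\<close>.
  Since \<open>1 \<notin> P\<close> and \<open>P\<close> contains no two consecutive integers, the cylinders
  \<open>[0 \<in> S] \<times> [0 \<in> S]\<close> and \<open>[0 \<in> S] \<times> [1 \<in> S]\<close> show that \<open>T \<times> T\<close> is not transitive.
  On the other hand the \<open>b\<^sub>i\<close> grow so fast that expansions with small digits are unique and the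
  expansions of the differences within an admissible set can be compensated digit by digit: for
  finite admissible \<open>A\<close>, \<open>B\<close> there are arbitrarily large \<open>N\<close>, divisible by any given \<open>k\<close>,
  with \<open>N + B - A \<subseteq> P\<close>, and the sign of one digit of \<open>N\<close> can be chosen so that \<open>N\<close> starts a
  long gap of a given admissible set. Gluing \<open>A\<close> and \<open>N + B\<close> gives total transitivity, and the
  gaps put the empty set into every \<open>\<omega>\<^bsub>\<N>\<^sub>T\<^esub>(x)\<close>.\<close>

section \<open>Spacing shifts\<close>

definition spacing :: "nat set \<Rightarrow> nat set \<Rightarrow> bool" where
  "spacing P S \<longleftrightarrow> (\<forall>x\<in>S. \<forall>y\<in>S. x < y \<longrightarrow> y - x \<in> P)"

lemma spacingD: "spacing P S \<Longrightarrow> x \<in> S \<Longrightarrow> y \<in> S \<Longrightarrow> x < y \<Longrightarrow> y - x \<in> P"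
  unfolding spacing_def by blast

lemma spacing_empty [simp]: "spacing P {}"
  unfolding spacing_def by simp

lemma spacing_singleton [simp]: "spacing P {x}"
  unfolding spacing_def by simp

lemma spacing_subset: "spacing P S \<Longrightarrow> T \<subseteq> S \<Longrightarrow> spacing P T"
  unfolding spacing_def by blast

lemma spacing_shift: "spacing P S \<Longrightarrow> spacing P {i. i + n \<in> S}"
  unfolding spacing_def by (metis add_diff_cancel_right add_less_cancel_right mem_Collect_eq)

lemma spacing_image_add: "spacing P S \<Longrightarrow> spacing P ((+) n ` S)"
  unfolding spacing_def by auto

lemma spacing_Un_image_add:
  assumes "spacing P A" "spacing P B" "\<forall>a\<in>A. a < N" "\<forall>a\<in>A. \<forall>b\<in>B. N + b - a \<in> P"
  shows "spacing P (A \<union> (+) N ` B)"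
  unfolding spacing_def
proof (intro ballI impI)
  fix x y assume x: "x \<in> A \<union> (+) N ` B" and y: "y \<in> A \<union> (+) N ` B" and "x < y"
  show "y - x \<in> P"
  proof (cases "x \<in> A")
    case True
    then show ?thesis
      using y \<open>x < y\<close> assms spacingD[OF assms(1)] by auto
  next
    case False
    then obtain b where b: "b \<in> B" "x = N + b" using x by blast
    then have "y \<notin> A" using \<open>x < y\<close> assms(3) by fastforce
    then obtain b' where "b' \<in> B" "y = N + b'" using y by blast
    then show ?thesis using b \<open>x < y\<close> spacingD[OF assms(2)] by fastforce
  qed
qed

text \<open>Points of the shift are subsets of \<open>\<nat>\<close>; they are coded by reals because the theorem
  asks for a dynamical system on a set of reals.\<close>

definition encode_set :: "nat set \<Rightarrow> real" where
  "encode_set = (SOME f. inj f)"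

lemma inj_encode_set: "inj encode_set"
proof -
  have "\<exists>f::nat set \<Rightarrow> real. inj f"
    using nat_sets_lepoll_reals01 unfolding lepoll_def by blast
  then show ?thesis unfolding encode_set_def by (rule someI_ex)
qed

definition decode_set :: "real \<Rightarrow> nat set" where
  "decode_set = inv encode_set"

lemma decode_encode_set [simp]: "decode_set (encode_set S) = S"
  unfolding decode_set_def by (rule inv_f_f[OF inj_encode_set])

definition cantor_dist :: "real \<Rightarrow> real \<Rightarrow> real" where
  "cantor_dist x y =
     (if decode_set x = decode_set y then 0
      else (1/2) ^ (LEAST n. (n \<in> decode_set x) \<noteq> (n \<in> decode_set y)))"

lemma cantor_dist_less_iff:
  "cantor_dist x y < (1/2)^m \<longleftrightarrow> decode_set x \<inter> {..m} = decode_set y \<inter> {..m}"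
proof (cases "decode_set x = decode_set y")
  case True
  then show ?thesis unfolding cantor_dist_def by simp
next
  case False
  define n where "n = (LEAST n. (n \<in> decode_set x) \<noteq> (n \<in> decode_set y))"
  have "\<exists>n. (n \<in> decode_set x) \<noteq> (n \<in> decode_set y)" using False by blast
  then have n: "(n \<in> decode_set x) \<noteq> (n \<in> decode_set y)"
    unfolding n_def by (rule LeastI_ex)
  have below_n: "(i \<in> decode_set x) = (i \<in> decode_set y)" if "i < n" for i
    using not_less_Least[OF that[unfolded n_def]] by blast
  have "decode_set x \<inter> {..m} = decode_set y \<inter> {..m} \<longleftrightarrow> m < n"
  proof
    assume "decode_set x \<inter> {..m} = decode_set y \<inter> {..m}"
    then show "m < n" using n by (metis IntI Int_iff atMost_iff not_less)
  qed (use below_n in auto)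
  moreover have "cantor_dist x y = (1/2)^n" unfolding cantor_dist_def n_def using False by simp
  ultimately show ?thesis by simp
qed

lemma cantor_dist_nonneg: "0 \<le> cantor_dist x y"
  unfolding cantor_dist_def by auto

lemma cantor_dist_commute: "cantor_dist x y = cantor_dist y x"
  unfolding cantor_dist_def by (auto simp: eq_commute)

lemma cantor_dist_eq_0_iff: "cantor_dist x y = 0 \<longleftrightarrow> decode_set x = decode_set y"
  unfolding cantor_dist_def by simp

lemma cantor_dist_ultrametric: "cantor_dist x z \<le> max (cantor_dist x y) (cantor_dist y z)"
proof (rule ccontr)
  assume "\<not> ?thesis"
  then have less: "cantor_dist x y < cantor_dist x z" "cantor_dist y z < cantor_dist x z"
    by auto
  then have "decode_set x \<noteq> decode_set z"
    using cantor_dist_nonneg[of x y] cantor_dist_eq_0_iff[of x z] by auto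
  then obtain n where n: "cantor_dist x z = (1/2)^n" unfolding cantor_dist_def by auto
  with less have "decode_set x \<inter> {..n} = decode_set z \<inter> {..n}"
    using cantor_dist_less_iff by (metis (no_types))
  then show False using n cantor_dist_less_iff[of x z n] by simp
qed

lemma exists_half_power_less: "(0::real) < r \<Longrightarrow> \<exists>m. (1/2)^m < r"
  using real_arch_pow_inv[of r "1/2"] by auto

lemma funpow_prod_map:
  fixes f :: "'a \<Rightarrow> 'a"
  shows "((\<lambda>(x, y). (f x, f y)) ^^ n) (a, b) = ((f ^^ n) a, (f ^^ n) b)"
  by (induction n) auto

definition set_shift :: "real \<Rightarrow> real" where
  "set_shift x = encode_set {i. Suc i \<in> decode_set x}"

locale spacing_shift =
  fixes P :: "nat set"
begin

definition shift_space :: "real set" where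
  "shift_space = encode_set ` {S. spacing P S}"

lemma spacing_decode_set: "x \<in> shift_space \<Longrightarrow> spacing P (decode_set x)"
  unfolding shift_space_def by auto

lemma encode_set_in_shift_space: "spacing P S \<Longrightarrow> encode_set S \<in> shift_space"
  unfolding shift_space_def by auto

lemma encode_decode_set: "x \<in> shift_space \<Longrightarrow> encode_set (decode_set x) = x"
  unfolding shift_space_def by auto

lemma shift_space_eqI:
  "x \<in> shift_space \<Longrightarrow> y \<in> shift_space \<Longrightarrow> decode_set x = decode_set y \<Longrightarrow> x = y"
  by (metis encode_decode_set)

sublocale Metric_space shift_space cantor_dist
proof
  fix x y z
  show "0 \<le> cantor_dist x y" by (rule cantor_dist_nonneg)
  show "cantor_dist x y = cantor_dist y x" by (rule cantor_dist_commute)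
  show "cantor_dist x z \<le> cantor_dist x y + cantor_dist y z"
    using cantor_dist_ultrametric[of x z y] cantor_dist_nonneg[of x y] cantor_dist_nonneg[of y z]
    by linarith
  assume "x \<in> shift_space" "y \<in> shift_space"
  then show "cantor_dist x y = 0 \<longleftrightarrow> x = y"
    using shift_space_eqI cantor_dist_eq_0_iff by blast
qed

lemma cantor_dist_less_half_power:
  "x \<in> shift_space \<Longrightarrow> y \<in> shift_space \<Longrightarrow> decode_set x \<inter> {..m} = decode_set y \<inter> {..m} \<Longrightarrow>
     y \<in> mball x ((1/2)^m)"
  using cantor_dist_less_iff by simp

lemma openin_contains_cylinder:
  assumes "openin mtopology U" "x \<in> U"
  obtains m where
    "\<And>y. y \<in> shift_space \<Longrightarrow> decode_set x \<inter> {..m} = decode_set y \<inter> {..m} \<Longrightarrow> y \<in> U"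
proof -
  obtain r where r: "r > 0" "mball x r \<subseteq> U" using assms openin_mtopology by blast
  obtain m where m: "(1/2)^m < r" using exists_half_power_less[OF r(1)] by blast
  have x: "x \<in> shift_space" using assms openin_mtopology by blast
  show ?thesis
  proof (rule that)
    fix y assume "y \<in> shift_space" "decode_set x \<inter> {..m} = decode_set y \<inter> {..m}"
    then have "y \<in> mball x ((1/2)^m)" by (rule cantor_dist_less_half_power[OF x])
    then show "y \<in> U" using mball_subset_concentric[OF less_imp_le[OF m]] r(2) by blast
  qed
qed

lemma openin_coordinate: "openin mtopology {y \<in> shift_space. i \<in> decode_set y}"
  unfolding openin_mtopology
proof (intro conjI allI impI)
  fix y assume y: "y \<in> {y \<in> shift_space. i \<in> decode_set y}"
  have "mball y ((1/2)^i) \<subseteq> {y \<in> shift_space. i \<in> decode_set y}"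
  proof
    fix z assume "z \<in> mball y ((1/2)^i)"
    then have "z \<in> shift_space" "decode_set y \<inter> {..i} = decode_set z \<inter> {..i}"
      using cantor_dist_less_iff by auto
    then show "z \<in> {y \<in> shift_space. i \<in> decode_set y}" using y by blast
  qed
  then show "\<exists>r>0. mball y r \<subseteq> {y \<in> shift_space. i \<in> decode_set y}"
    by (intro exI[of _ "(1/2)^i"]) simp
qed auto

lemma decode_funpow_set_shift:
  "x \<in> shift_space \<Longrightarrow>
     (set_shift ^^ n) x \<in> shift_space \<and> decode_set ((set_shift ^^ n) x) = {i. i + n \<in> decode_set x}"
proof (induction n)
  case (Suc n)
  have "spacing P {i. i + Suc n \<in> decode_set x}"
    using spacing_shift spacing_decode_set[OF Suc.prems] by blast
  with Suc show ?case by (simp add: set_shift_def encode_set_in_shift_space)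
qed simp

lemma funpow_set_shift_in_shift_space: "x \<in> shift_space \<Longrightarrow> (set_shift ^^ n) x \<in> shift_space"
  using decode_funpow_set_shift by blast

lemma decode_set_shift: "x \<in> shift_space \<Longrightarrow> decode_set (set_shift x) = {i. Suc i \<in> decode_set x}"
  using decode_funpow_set_shift[of x 1] by simp

lemma set_shift_in_shift_space: "x \<in> shift_space \<Longrightarrow> set_shift x \<in> shift_space"
  using funpow_set_shift_in_shift_space[of x 1] by simp

lemma set_shift_image: "set_shift ` shift_space = shift_space"
proof
  show "set_shift ` shift_space \<subseteq> shift_space" using set_shift_in_shift_space by auto
  show "shift_space \<subseteq> set_shift ` shift_space"
  proof
    fix x assume x: "x \<in> shift_space"
    define y where "y = encode_set (Suc ` decode_set x)"
    have y: "y \<in> shift_space"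
      unfolding y_def using spacing_image_add[of P _ 1] spacing_decode_set[OF x]
      by (simp add: encode_set_in_shift_space)
    then have "set_shift y = x"
      using x by (intro shift_space_eqI) (auto simp: decode_set_shift set_shift_in_shift_space y_def)
    then show "x \<in> set_shift ` shift_space" using y by blast
  qed
qed

lemma continuous_map_set_shift: "continuous_map mtopology mtopology set_shift"
  unfolding metric_continuous_map[OF Metric_space_axioms]
proof (intro conjI ballI allI impI)
  show "set_shift ` shift_space \<subseteq> shift_space" using set_shift_image by simp
  fix a and \<epsilon> :: real assume a: "a \<in> shift_space" and "\<epsilon> > 0"
  then obtain m where m: "(1/2)^m < \<epsilon>" using exists_half_power_less by blast
  show "\<exists>\<delta>>0. \<forall>x. x \<in> shift_space \<and> cantor_dist a x < \<delta> \<longrightarrow> cantor_dist (set_shift a) (set_shift x) < \<epsilon>"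
  proof (intro exI conjI allI impI)
    fix x assume x: "x \<in> shift_space \<and> cantor_dist a x < (1/2)^(Suc m)"
    then have "decode_set a \<inter> {..Suc m} = decode_set x \<inter> {..Suc m}"
      using cantor_dist_less_iff by blast
    then have "decode_set (set_shift a) \<inter> {..m} = decode_set (set_shift x) \<inter> {..m}"
      using a x unfolding decode_set_shift[OF a] by (auto simp: decode_set_shift; blast)
    then show "cantor_dist (set_shift a) (set_shift x) < \<epsilon>"
      using m cantor_dist_less_iff by (metis order.strict_trans)
  qed simp
qed

lemma MCauchy_prefixes_stabilise:
  assumes "MCauchy \<sigma>"
  obtains N where "\<And>i n n'. N i \<le> n \<Longrightarrow> N i \<le> n' \<Longrightarrow>
    decode_set (\<sigma> n) \<inter> {..i} = decode_set (\<sigma> n') \<inter> {..i}"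
proof -
  have "\<forall>i. \<exists>N. \<forall>n n'. N \<le> n \<longrightarrow> N \<le> n' \<longrightarrow> cantor_dist (\<sigma> n) (\<sigma> n') < (1/2)^i"
    using assms unfolding MCauchy_def by simp
  then obtain N where "\<forall>i n n'. N i \<le> n \<longrightarrow> N i \<le> n' \<longrightarrow> cantor_dist (\<sigma> n) (\<sigma> n') < (1/2)^i"
    unfolding choice_iff by blast
  then show ?thesis using that cantor_dist_less_iff by blast
qed

lemma mcomplete_shift_space: "mcomplete"
  unfolding mcomplete_def
proof (intro allI impI)
  fix \<sigma> assume \<sigma>: "MCauchy \<sigma>"
  have in_space: "\<sigma> n \<in> shift_space" for n using \<sigma> unfolding MCauchy_def by auto
  obtain N where N: "\<And>i n n'. N i \<le> n \<Longrightarrow> N i \<le> n' \<Longrightarrow>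
      decode_set (\<sigma> n) \<inter> {..i} = decode_set (\<sigma> n') \<inter> {..i}"
    using MCauchy_prefixes_stabilise[OF \<sigma>] by blast
  define S where "S = {i. i \<in> decode_set (\<sigma> (N i))}"
  have stable: "(i \<in> decode_set (\<sigma> n)) = (i \<in> S)" if "N i \<le> n" for i n
    using N[OF that order.refl] unfolding S_def by blast
  have "spacing P S"
    unfolding spacing_def
  proof (intro ballI impI)
    fix x y assume "x \<in> S" "y \<in> S" "x < y"
    then have "x \<in> decode_set (\<sigma> (max (N x) (N y)))" "y \<in> decode_set (\<sigma> (max (N x) (N y)))"
      using stable by auto
    then show "y - x \<in> P" using spacing_decode_set[OF in_space] \<open>x < y\<close> spacingD by blast
  qed
  then have S_in: "encode_set S \<in> shift_space" by (rule encode_set_in_shift_space)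
  have "limitin mtopology \<sigma> (encode_set S) sequentially"
    unfolding limit_metric_sequentially
  proof (intro conjI allI impI S_in)
    fix \<epsilon> :: real assume "\<epsilon> > 0"
    then obtain m where m: "(1/2)^m < \<epsilon>" using exists_half_power_less by blast
    define n0 where "n0 = Max (N ` {..m})"
    have "cantor_dist (\<sigma> n) (encode_set S) < \<epsilon>" if "n0 \<le> n" for n
    proof -
      have "N i \<le> n0" if "i \<le> m" for i
        unfolding n0_def using that by (intro Max_ge) auto
      then have "N i \<le> n" if "i \<le> m" for i
        using \<open>n0 \<le> n\<close> that order.trans by blast
      then have "decode_set (\<sigma> n) \<inter> {..m} = decode_set (encode_set S) \<inter> {..m}"
        using stable by auto
      then show ?thesis using m cantor_dist_less_iff by (metis order.strict_trans)
    qed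
    then show "\<exists>n0. \<forall>n\<ge>n0. \<sigma> n \<in> shift_space \<and> cantor_dist (\<sigma> n) (encode_set S) < \<epsilon>"
      using in_space by blast
  qed
  then show "\<exists>x. limitin mtopology \<sigma> x sequentially" by blast
qed

lemma mtotally_bounded_shift_space: "mtotally_bounded shift_space"
  unfolding mtotally_bounded_def
proof (intro allI impI)
  fix \<epsilon> :: real assume "\<epsilon> > 0"
  then obtain m where m: "(1/2)^m < \<epsilon>" using exists_half_power_less by blast
  define prefix where "prefix y = decode_set y \<inter> {..m}" for y
  define rep where "rep p = (SOME y. y \<in> shift_space \<and> prefix y = p)" for p
  have rep: "rep (prefix x) \<in> shift_space \<and> prefix (rep (prefix x)) = prefix x"
    if "x \<in> shift_space" for x
    unfolding rep_def by (rule someI_ex) (use that in blast)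
  have "finite (prefix ` shift_space)"
    by (rule finite_subset[of _ "Pow {..m}"]) (auto simp: prefix_def)
  moreover have "x \<in> mball (rep (prefix x)) \<epsilon>" if x: "x \<in> shift_space" for x
  proof -
    have "decode_set (rep (prefix x)) \<inter> {..m} = decode_set x \<inter> {..m}"
      using rep[OF x] unfolding prefix_def by simp
    then have "cantor_dist (rep (prefix x)) x < \<epsilon>"
      using m cantor_dist_less_iff by (metis order.strict_trans)
    then show ?thesis using rep[OF x] x by simp
  qed
  ultimately have "finite (rep ` prefix ` shift_space) \<and> rep ` prefix ` shift_space \<subseteq> shift_space
      \<and> shift_space \<subseteq> (\<Union>x\<in>rep ` prefix ` shift_space. mball x \<epsilon>)"
    using rep by blast
  then show "\<exists>K. finite K \<and> K \<subseteq> shift_space \<and> shift_space \<subseteq> (\<Union>x\<in>K. mball x \<epsilon>)"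
    by blast
qed

lemma compact_space_shift_space: "compact_space mtopology"
  unfolding compact_space_eq_mcomplete_mtotally_bounded
  using mcomplete_shift_space mtotally_bounded_shift_space by blast

lemma not_weakly_mixing_set_shift:
  assumes "1 \<notin> P" and "\<And>n. n \<in> P \<Longrightarrow> Suc n \<notin> P"
  shows "\<not> weakly_mixing mtopology set_shift"
proof
  define C where "C i = {y \<in> shift_space. i \<in> decode_set y}" for i
  have open_C: "openin mtopology (C i)" for i unfolding C_def by (rule openin_coordinate)
  have singleton_in_C: "encode_set {i} \<in> C i" for i
    unfolding C_def by (simp add: encode_set_in_shift_space)
  have "opene (prod_topology mtopology mtopology) (C 0 \<times> C i)" for i
    unfolding opene_def using open_C singleton_in_C by (auto simp: openin_prod_Times_iff)
  moreover assume "weakly_mixing mtopology set_shift"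
  ultimately obtain n where
    "n \<in> hit_times (\<lambda>(x, y). (set_shift x, set_shift y)) (C 0 \<times> C 0) (C 0 \<times> C 1)"
    unfolding weakly_mixing_def top_transitive_def by blast
  then obtain x y where "(x, y) \<in> C 0 \<times> C 0"
    "((\<lambda>(x, y). (set_shift x, set_shift y)) ^^ n) (x, y) \<in> C 0 \<times> C 1"
    unfolding hit_times_def by auto
  then have x: "x \<in> C 0" "(set_shift ^^ n) x \<in> C 0"
    and y: "y \<in> C 0" "(set_shift ^^ n) y \<in> C 1"
    unfolding funpow_prod_map by auto
  have "n \<in> decode_set x" using x decode_funpow_set_shift unfolding C_def by simp
  moreover have "Suc n \<in> decode_set y" using y decode_funpow_set_shift unfolding C_def by simp
  ultimately have "n = 0 \<or> n \<in> P" "Suc n \<in> P"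
    using x(1) y(1) spacingD[OF spacing_decode_set] unfolding C_def by fastforce+
  then show False using assms by auto
qed

end

text \<open>The gluing property of \<open>P\<close> behind transitivity: finite admissible blocks \<open>A\<close> and \<open>B\<close>
  can be joined at a distance \<open>N\<close> that is large, divisible by \<open>k\<close>, and starts a gap of length
  \<open>L\<close> in a given admissible set \<open>S\<close>.\<close>

locale rich_spacing_shift = spacing_shift +
  assumes translate_spacing:
    "\<lbrakk>finite A; spacing P A; finite B; spacing P B; spacing P S; 0 < k\<rbrakk> \<Longrightarrow>
       \<exists>N\<ge>M. k dvd N \<and> (\<forall>a\<in>A. \<forall>b\<in>B. N + b - a \<in> P) \<and> (\<forall>j\<le>L. N + j \<notin> S)"
begin

lemma exists_hit_time:
  assumes U: "openin mtopology U" "x \<in> U" and V: "openin mtopology V" "y \<in> V"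
    and "spacing P S" "0 < k"
  obtains N where "k dvd N" "N \<in> hit_times set_shift U V" "\<forall>j\<le>L. N + j \<notin> S"
proof -
  have x: "x \<in> shift_space" and y: "y \<in> shift_space"
    using U V openin_mtopology by blast+
  obtain p where p: "\<And>z. z \<in> shift_space \<Longrightarrow> decode_set x \<inter> {..p} = decode_set z \<inter> {..p} \<Longrightarrow> z \<in> U"
    using openin_contains_cylinder[OF U] by blast
  obtain q where q: "\<And>z. z \<in> shift_space \<Longrightarrow> decode_set y \<inter> {..q} = decode_set z \<inter> {..q} \<Longrightarrow> z \<in> V"
    using openin_contains_cylinder[OF V] by blast
  define A where "A = decode_set x \<inter> {..p}"
  define B where "B = decode_set y \<inter> {..q}"
  have A: "finite A" "spacing P A" and B: "finite B" "spacing P B"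
    unfolding A_def B_def
    using spacing_subset[OF spacing_decode_set Int_lower1] x y by auto
  obtain N where N: "Suc p \<le> N" "k dvd N" "\<forall>a\<in>A. \<forall>b\<in>B. N + b - a \<in> P" "\<forall>j\<le>L. N + j \<notin> S"
    using translate_spacing[OF A B assms(5,6)] by blast
  define z where "z = encode_set (A \<union> (+) N ` B)"
  have "\<forall>a\<in>A. a < N" using N(1) unfolding A_def by auto
  then have z: "z \<in> shift_space"
    unfolding z_def using A(2) B(2) N(3) by (intro encode_set_in_shift_space spacing_Un_image_add)
  have "decode_set x \<inter> {..p} = decode_set z \<inter> {..p}"
    unfolding z_def A_def using N(1) by auto
  then have "z \<in> U" by (rule p[OF z])
  moreover have "decode_set y \<inter> {..q} = decode_set ((set_shift ^^ N) z) \<inter> {..q}"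
    using decode_funpow_set_shift[OF z] N(1) unfolding z_def A_def B_def by auto
  then have "(set_shift ^^ N) z \<in> V" by (rule q[OF funpow_set_shift_in_shift_space[OF z]])
  ultimately have "N \<in> hit_times set_shift U V" unfolding hit_times_def by blast
  then show ?thesis using N that by blast
qed

lemma totally_transitive_set_shift: "totally_transitive mtopology set_shift"
  unfolding totally_transitive_def top_transitive_def
proof (intro allI impI)
  fix k :: nat and U V assume "1 \<le> k" and "opene mtopology U \<and> opene mtopology V"
  then obtain x y where "openin mtopology U" "x \<in> U" "openin mtopology V" "y \<in> V"
    unfolding opene_def by blast
  then obtain N where "k dvd N" "N \<in> hit_times set_shift U V"
    using exists_hit_time[of U x V y "{}" k] \<open>1 \<le> k\<close> by auto
  then obtain n where "N = k * n" "N \<in> hit_times set_shift U V" by blast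
  then have "n \<in> hit_times (set_shift ^^ k) U V" unfolding hit_times_def by (simp add: funpow_mult)
  then show "hit_times (set_shift ^^ k) U V \<noteq> {}" by blast
qed

text \<open>The hitting times in any \<open>N\<^sub>T(U,V)\<close> can be chosen to start an arbitrarily long gap
  of \<open>x\<close>.\<close>

lemma encode_empty_in_omega_family:
  assumes "x \<in> shift_space"
  shows "encode_set {} \<in> omega_family mtopology set_shift x"
  unfolding omega_family_def
proof (intro InterI)
  fix G assume "G \<in> (\<lambda>F. mtopology closure_of {(set_shift ^^ i) x |i. i \<in> F}) ` hit_family mtopology set_shift"
  then obtain F U V where G: "G = mtopology closure_of {(set_shift ^^ i) x |i. i \<in> F}"
    and UV: "opene mtopology U" "opene mtopology V" "hit_times set_shift U V \<subseteq> F"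
    unfolding hit_family_def by blast
  obtain u v where uv: "openin mtopology U" "u \<in> U" "openin mtopology V" "v \<in> V"
    using UV unfolding opene_def by blast
  have "\<exists>i\<in>F. (set_shift ^^ i) x \<in> W" if W: "openin mtopology W" "encode_set {} \<in> W" for W
  proof -
    obtain L where L: "\<And>z. z \<in> shift_space \<Longrightarrow> decode_set (encode_set {}) \<inter> {..L} = decode_set z \<inter> {..L} \<Longrightarrow> z \<in> W"
      using openin_contains_cylinder[OF W] by blast
    obtain N where N: "N \<in> hit_times set_shift U V" "\<forall>j\<le>L. N + j \<notin> decode_set x"
      using exists_hit_time[OF uv spacing_decode_set[OF assms], of 1 L] by auto
    have "decode_set (encode_set {}) \<inter> {..L} = decode_set ((set_shift ^^ N) x) \<inter> {..L}"
      using N(2) decode_funpow_set_shift[OF assms] by (auto simp: add.commute)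
    then have "(set_shift ^^ N) x \<in> W" by (rule L[OF funpow_set_shift_in_shift_space[OF assms]])
    then show ?thesis using N(1) UV(3) by blast
  qed
  then show "encode_set {} \<in> G"
    unfolding G in_closure_of by (fastforce simp: encode_set_in_shift_space)
qed

lemma transitive_compact_set_shift: "transitive_compact mtopology set_shift"
  unfolding transitive_compact_def using encode_empty_in_omega_family by auto

lemma exists_other_point:
  assumes "openin mtopology U" "x \<in> U"
  shows "\<exists>y\<in>U. y \<noteq> x"
proof -
  obtain m where m: "\<And>z. z \<in> shift_space \<Longrightarrow> decode_set x \<inter> {..m} = decode_set z \<inter> {..m} \<Longrightarrow> z \<in> U"
    using openin_contains_cylinder[OF assms] by blast
  define A where "A = decode_set x \<inter> {..m}"
  have "x \<in> shift_space" using assms openin_mtopology by blast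
  then have A: "finite A" "spacing P A"
    unfolding A_def using spacing_subset[OF spacing_decode_set Int_lower1] by auto
  obtain N where N: "Suc m \<le> N" "\<forall>a\<in>A. N + 0 - a \<in> P"
    using translate_spacing[OF A, of "{0}" "{}" 1 "Suc m" 0] by auto
  have "\<forall>a\<in>A. a < N" using N(1) unfolding A_def by auto
  then have "spacing P (A \<union> (+) N ` {0})"
    using A(2) N(2) by (intro spacing_Un_image_add) auto
  then have y1: "encode_set A \<in> shift_space" and y2: "encode_set (insert N A) \<in> shift_space"
    using A(2) by (auto intro: encode_set_in_shift_space)
  have "encode_set A \<in> U" "encode_set (insert N A) \<in> U"
    using m[OF y1] m[OF y2] N(1) unfolding A_def by auto
  moreover have "encode_set A \<noteq> encode_set (insert N A)"
    using N(1) inj_encode_set unfolding A_def by (metis decode_encode_set Int_iff atMost_iff insertI1 not_less_eq_eq)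
  ultimately show ?thesis by metis
qed

lemma dyn_system_set_shift: "dyn_system shift_space cantor_dist set_shift"
  unfolding dyn_system_def
proof (intro conjI)
  have "encode_set {} \<noteq> encode_set {0}" using inj_encode_set by (metis decode_encode_set empty_iff insertI1)
  then show "\<exists>x\<in>shift_space. \<exists>y\<in>shift_space. x \<noteq> y"
    by (metis encode_set_in_shift_space spacing_empty spacing_singleton)
  show "\<forall>x\<in>shift_space. \<forall>U. openin mtopology U \<and> x \<in> U \<longrightarrow> (\<exists>y\<in>U. y \<noteq> x)"
    using exists_other_point by blast
qed (fact Metric_space_axioms compact_space_shift_space continuous_map_set_shift set_shift_image)+

end

section \<open>Balanced expansions\<close>

text \<open>Growth by a factor \<open>\<ge> 10\<close> makes expansions with small digits unique, and
  \<open>b\<^sub>i \<equiv> 1 (mod k)\<close> for \<open>i \<ge> k\<close> lets a block of ones adjust residues.\<close>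

definition digit_base :: "nat \<Rightarrow> int" where
  "digit_base i = 10 ^ (i + 1) * fact (i + 1) + 1"

lemma digit_base_ge: "11 \<le> digit_base i"
proof -
  have "(10::int) \<le> 10 ^ (i + 1)" by simp
  then have "(10::int) * 1 \<le> 10 ^ (i + 1) * fact (i + 1)"
    by (rule mult_mono[OF _ fact_ge_1]) auto
  then show ?thesis unfolding digit_base_def by simp
qed

lemma digit_base_Suc_ge: "10 * digit_base i \<le> digit_base (Suc i)"
proof -
  define F where "F = (fact (i + 1) :: int)"
  define G where "G = (fact (Suc i + 1) :: int)"
  define Q where "Q = (10::int) ^ (i + 1)"
  have F: "1 \<le> F" unfolding F_def by (rule fact_ge_1)
  have "G = of_nat (Suc (i + 1)) * F"
    unfolding F_def G_def by (simp only: Suc_eq_plus1[symmetric] fact_Suc)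
  moreover have "2 * F \<le> of_nat (Suc (i + 1)) * F" using F by (intro mult_right_mono) auto
  ultimately have "F + 1 \<le> G" using F by linarith
  moreover have Q: "1 \<le> Q" unfolding Q_def by (rule one_le_power) simp
  ultimately have "10 * Q * (F + 1) \<le> 10 * Q * G" by (intro mult_left_mono) auto
  moreover have "digit_base i = Q * F + 1" "digit_base (Suc i) = 10 * Q * G + 1"
    unfolding digit_base_def Q_def F_def G_def by simp_all
  ultimately show ?thesis using Q by (simp add: distrib_left)
qed

lemma mono_digit_base: "mono digit_base"
proof -
  have "digit_base i \<le> digit_base (Suc i)" for i
    using digit_base_Suc_ge[of i] digit_base_ge[of i] by linarith
  then show ?thesis unfolding mono_iff_le_Suc by blast
qed

lemma of_nat_less_digit_base: "int t < digit_base t"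
proof (induction t)
  case 0
  then show ?case using digit_base_ge[of 0] by simp
next
  case (Suc t)
  then show ?case using digit_base_Suc_ge[of t] digit_base_ge[of t] by simp
qed

lemma sum_digit_base_le: "9 * (\<Sum>i<u. digit_base i) \<le> digit_base u"
proof (induction u)
  case 0
  then show ?case using digit_base_ge[of 0] by simp
next
  case (Suc u)
  then show ?case using digit_base_Suc_ge[of u] by simp
qed

lemma dvd_digit_base_minus_1:
  assumes "0 < k" "k \<le> i"
  shows "int k dvd digit_base i - 1"
proof -
  have "k dvd fact (i + 1)" using assms by (intro dvd_fact) auto
  then have "int k dvd fact (i + 1)" by (metis int_dvd_int_iff of_nat_fact)
  then show ?thesis unfolding digit_base_def by simp
qed

lemma abs_digit_sum_less:
  assumes "\<And>i. \<bar>c i\<bar> \<le> 4"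
  shows "2 * \<bar>\<Sum>i<u. c i * digit_base i\<bar> < digit_base u"
proof -
  have "\<bar>c i * digit_base i\<bar> = \<bar>c i\<bar> * digit_base i" for i
    using digit_base_ge[of i] by (simp add: abs_mult)
  then have "\<bar>\<Sum>i<u. c i * digit_base i\<bar> \<le> (\<Sum>i<u. \<bar>c i\<bar> * digit_base i)"
    using sum_abs[of "\<lambda>i. c i * digit_base i" "{..<u}"] by simp
  also have "\<dots> \<le> (\<Sum>i<u. 4 * digit_base i)"
  proof (intro sum_mono mult_right_mono)
    show "0 \<le> digit_base i" for i using digit_base_ge[of i] by linarith
  qed (use assms in auto)
  also have "\<dots> = 4 * (\<Sum>i<u. digit_base i)" by (simp add: sum_distrib_left)
  finally show ?thesis using sum_digit_base_le[of u] digit_base_ge[of u] by linarith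
qed

text \<open>Digit sums with digits of absolute value \<open>\<le> 4\<close> determine their digits.\<close>

lemma digit_base_less_abs_digit_sum:
  assumes "\<And>i. \<bar>c i\<bar> \<le> 4" "\<And>i. K \<le> i \<Longrightarrow> c i = 0" "t \<le> j" "c j \<noteq> 0"
  shows "digit_base t < 2 * \<bar>\<Sum>i<K. c i * digit_base i\<bar>"
  using assms(2)
proof (induction K)
  case 0
  then show ?case using assms(4) by auto
next
  case (Suc K)
  show ?case
  proof (cases "c K = 0")
    case True
    then have "\<And>i. K \<le> i \<Longrightarrow> c i = 0" using Suc.prems by (metis le_eq_less_or_eq Suc_le_eq)
    then show ?thesis using Suc.IH True by simp
  next
    case False
    have "j \<le> K" using Suc.prems[of j] assms(4) by (metis not_less_eq_eq)
    then have "digit_base t \<le> digit_base K" using assms(3) mono_digit_base by (simp add: monoD)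
    moreover have "digit_base K \<le> \<bar>c K * digit_base K\<bar>"
      using False digit_base_ge[of K] by (simp add: abs_mult)
    moreover have "2 * \<bar>\<Sum>i<K. c i * digit_base i\<bar> < digit_base K"
      by (rule abs_digit_sum_less[OF assms(1)])
    moreover have "\<bar>c K * digit_base K\<bar> \<le>
        \<bar>(\<Sum>i<K. c i * digit_base i) + c K * digit_base K\<bar> + \<bar>\<Sum>i<K. c i * digit_base i\<bar>"
      using abs_triangle_ineq[of "(\<Sum>i<K. c i * digit_base i) + c K * digit_base K"
          "- (\<Sum>i<K. c i * digit_base i)"] by simp
    ultimately show ?thesis by simp
  qed
qed

lemma digit_base_less_top_digit_sum:
  assumes "\<And>i. \<bar>c i\<bar> \<le> 4" "c u = 1"
  shows "digit_base u < 2 * (\<Sum>i<Suc u. c i * digit_base i)"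
proof -
  have "2 * \<bar>\<Sum>i<u. c i * digit_base i\<bar> < digit_base u" by (rule abs_digit_sum_less[OF assms(1)])
  moreover have "(\<Sum>i<Suc u. c i * digit_base i) = (\<Sum>i<u. c i * digit_base i) + digit_base u"
    using assms(2) by simp
  ultimately show ?thesis by arith
qed

lemma sum_lessThan_eq_of_zero_above:
  fixes f :: "nat \<Rightarrow> 'a::comm_monoid_add"
  assumes "\<And>i. K \<le> i \<Longrightarrow> f i = 0" "K \<le> K'"
  shows "sum f {..<K'} = sum f {..<K}"
  using assms by (intro sum.mono_neutral_right) auto

definition balanced_expansion :: "(nat \<Rightarrow> int) \<Rightarrow> int \<Rightarrow> bool" where
  "balanced_expansion e x \<longleftrightarrow>
     (\<forall>i. \<bar>e i\<bar> \<le> 1) \<and> (\<exists>K. (\<forall>i\<ge>K. e i = 0) \<and> x = (\<Sum>i<K. e i * digit_base i))"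

lemma balanced_expansion_digit: "balanced_expansion e x \<Longrightarrow> \<bar>e i\<bar> \<le> 1"
  unfolding balanced_expansion_def by blast

lemma balanced_expansion_support: "balanced_expansion e x \<Longrightarrow> \<exists>K. \<forall>i\<ge>K. e i = 0"
  unfolding balanced_expansion_def by blast

lemma balanced_expansion_value:
  assumes "balanced_expansion e x" "\<And>i. K \<le> i \<Longrightarrow> e i = 0"
  shows "x = (\<Sum>i<K. e i * digit_base i)"
proof -
  obtain K0 where K0: "\<forall>i\<ge>K0. e i = 0" "x = (\<Sum>i<K0. e i * digit_base i)"
    using assms(1) unfolding balanced_expansion_def by blast
  have "(\<Sum>i<max K K0. e i * digit_base i) = (\<Sum>i<K0. e i * digit_base i)"
    using K0(1) by (intro sum_lessThan_eq_of_zero_above) auto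
  moreover have "(\<Sum>i<max K K0. e i * digit_base i) = (\<Sum>i<K. e i * digit_base i)"
    using assms(2) by (intro sum_lessThan_eq_of_zero_above) auto
  ultimately show ?thesis using K0(2) by simp
qed

lemma balanced_expansionI:
  "(\<And>i. \<bar>e i\<bar> \<le> 1) \<Longrightarrow> (\<And>i. K \<le> i \<Longrightarrow> e i = 0) \<Longrightarrow> x = (\<Sum>i<K. e i * digit_base i) \<Longrightarrow>
     balanced_expansion e x"
  unfolding balanced_expansion_def by blast

lemma balanced_expansion_0: "balanced_expansion (\<lambda>_. 0) 0"
  by (rule balanced_expansionI[of _ 0]) auto

lemma balanced_expansions_common_support:
  assumes "balanced_expansion e x" "balanced_expansion g y"
  obtains K where "\<And>i. K \<le> i \<Longrightarrow> e i = 0" "\<And>i. K \<le> i \<Longrightarrow> g i = 0"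
proof -
  obtain K1 K2 where "\<forall>i\<ge>K1. e i = 0" "\<forall>i\<ge>K2. g i = 0"
    using assms balanced_expansion_support by metis
  then show ?thesis using that[of "max K1 K2"] by simp
qed

lemma balanced_expansions_agree:
  assumes "balanced_expansion e x" "balanced_expansion g y" "2 * \<bar>x - y\<bar> < digit_base t"
  shows "e t = g t"
proof (rule ccontr)
  obtain K where K: "\<And>i. K \<le> i \<Longrightarrow> e i = 0" "\<And>i. K \<le> i \<Longrightarrow> g i = 0"
    using balanced_expansions_common_support[OF assms(1,2)] by blast
  have "x - y = (\<Sum>i<K. (e i - g i) * digit_base i)"
    using balanced_expansion_value[OF assms(1) K(1)] balanced_expansion_value[OF assms(2) K(2)]
    by (simp add: left_diff_distrib sum_subtractf)
  moreover assume "e t \<noteq> g t"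
  then have "digit_base t < 2 * \<bar>\<Sum>i<K. (e i - g i) * digit_base i\<bar>"
  proof (intro digit_base_less_abs_digit_sum[where j = t])
    show "\<bar>e i - g i\<bar> \<le> 4" for i
      using balanced_expansion_digit[OF assms(1), of i] balanced_expansion_digit[OF assms(2), of i]
      by linarith
  qed (use K in auto)
  ultimately show False using assms(3) by simp
qed

lemma balanced_expansion_diff:
  assumes "balanced_expansion e x" "balanced_expansion g y" "balanced_expansion h (x - y)"
  shows "e i - g i = h i"
proof (rule ccontr)
  obtain K' where K': "\<And>i. K' \<le> i \<Longrightarrow> e i = 0" "\<And>i. K' \<le> i \<Longrightarrow> g i = 0"
    using balanced_expansions_common_support[OF assms(1,2)] by blast
  obtain K'' where K'': "\<And>i. K'' \<le> i \<Longrightarrow> h i = 0"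
    using balanced_expansion_support[OF assms(3)] by blast
  define K where "K = max K' K''"
  have "(\<Sum>i<K. (e i - g i - h i) * digit_base i) = x - y - (x - y)"
    using balanced_expansion_value[OF assms(1), of K] balanced_expansion_value[OF assms(2), of K]
      balanced_expansion_value[OF assms(3), of K] K' K''
    by (simp add: K_def left_diff_distrib sum_subtractf)
  moreover assume "e i - g i \<noteq> h i"
  then have "digit_base 0 < 2 * \<bar>\<Sum>i<K. (e i - g i - h i) * digit_base i\<bar>"
  proof (intro digit_base_less_abs_digit_sum[where j = i])
    show "\<bar>e j - g j - h j\<bar> \<le> 4" for j
      using balanced_expansion_digit[OF assms(1), of j] balanced_expansion_digit[OF assms(2), of j]
        balanced_expansion_digit[OF assms(3), of j] by linarith
  qed (use K' K'' in \<open>auto simp: K_def\<close>)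
  ultimately show False using digit_base_ge[of 0] by simp
qed

lemma not_balanced_expansion_add_1:
  assumes "balanced_expansion e x"
  shows "\<not> balanced_expansion g (x + 1)"
proof
  assume g: "balanced_expansion g (x + 1)"
  have "2 * \<bar>(x + 1) - x\<bar> < digit_base i" for i using digit_base_ge[of i] by simp
  then have "g = e" using balanced_expansions_agree[OF g assms] by blast
  obtain K where K: "\<And>i. K \<le> i \<Longrightarrow> e i = 0" "\<And>i. K \<le> i \<Longrightarrow> g i = 0"
    using balanced_expansions_common_support[OF assms g] by blast
  have "x = (\<Sum>i<K. e i * digit_base i)" by (rule balanced_expansion_value[OF assms K(1)])
  moreover have "x + 1 = (\<Sum>i<K. g i * digit_base i)" by (rule balanced_expansion_value[OF g K(2)])
  ultimately show False using \<open>g = e\<close> by simp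
qed

definition balanced_set :: "nat set" where
  "balanced_set = {n. 0 < n \<and> (\<exists>e. balanced_expansion e (int n))}"

lemma one_notin_balanced_set: "1 \<notin> balanced_set"
  unfolding balanced_set_def
  using not_balanced_expansion_add_1[OF balanced_expansion_0] by simp

lemma Suc_notin_balanced_set:
  assumes "n \<in> balanced_set"
  shows "Suc n \<notin> balanced_set"
proof -
  obtain e where "balanced_expansion e (int n)" using assms unfolding balanced_set_def by blast
  moreover have "int (Suc n) = int n + 1" by simp
  ultimately have "\<not> balanced_expansion g (int (Suc n))" for g
    using not_balanced_expansion_add_1 by presburger
  then show ?thesis unfolding balanced_set_def by blast
qed

section \<open>Gluing admissible blocks\<close>

lemma spacing_balanced_expansions:
  assumes S: "spacing balanced_set S" and s0: "s0 \<in> S" "\<And>s. s \<in> S \<Longrightarrow> s0 \<le> s"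
  obtains \<delta> where "\<And>s. s \<in> S \<Longrightarrow> balanced_expansion (\<delta> s) (int s - int s0)"
    and "\<And>s s' i. s \<in> S \<Longrightarrow> s' \<in> S \<Longrightarrow> \<bar>\<delta> s i - \<delta> s' i\<bar> \<le> 1"
proof -
  have "\<exists>e. balanced_expansion e (int s - int s0)" if s: "s \<in> S" for s
  proof (cases "s = s0")
    case True
    then show ?thesis using balanced_expansion_0 by auto
  next
    case False
    then have "s - s0 \<in> balanced_set" using spacingD[OF S s0(1) s] s0(2)[OF s] by simp
    then show ?thesis unfolding balanced_set_def using s0(2)[OF s] by auto
  qed
  then obtain \<delta> where \<delta>: "\<And>s. s \<in> S \<Longrightarrow> balanced_expansion (\<delta> s) (int s - int s0)" by metis
  have close: "\<bar>\<delta> s i - \<delta> s' i\<bar> \<le> 1" if ss': "s \<in> S" "s' \<in> S" "s < s'" for s s' i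
  proof -
    obtain h where "balanced_expansion h (int (s' - s))"
      using spacingD[OF S ss'] unfolding balanced_set_def by blast
    then have h: "balanced_expansion h ((int s' - int s0) - (int s - int s0))"
      using ss'(3) by simp
    have "\<delta> s' i - \<delta> s i = h i" by (rule balanced_expansion_diff[OF \<delta>[OF ss'(2)] \<delta>[OF ss'(1)] h])
    then show ?thesis using balanced_expansion_digit[OF h, of i] by linarith
  qed
  have "\<bar>\<delta> s i - \<delta> s' i\<bar> \<le> 1" if "s \<in> S" "s' \<in> S" for s s' i
    using close[OF that] close[OF that(2,1)] by (cases s s' rule: linorder_cases) (auto simp: abs_minus_commute)
  with \<delta> show thesis by (rule that)
qed

lemma exists_compensating_digit:
  fixes \<alpha> :: "'a \<Rightarrow> int" and \<beta> :: "'b \<Rightarrow> int"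
  assumes "\<And>a. a \<in> A \<Longrightarrow> \<bar>\<alpha> a\<bar> \<le> 1" "\<And>a a'. a \<in> A \<Longrightarrow> a' \<in> A \<Longrightarrow> \<bar>\<alpha> a - \<alpha> a'\<bar> \<le> 1"
    and "\<And>b. b \<in> B \<Longrightarrow> \<bar>\<beta> b\<bar> \<le> 1" "\<And>b b'. b \<in> B \<Longrightarrow> b' \<in> B \<Longrightarrow> \<bar>\<beta> b - \<beta> b'\<bar> \<le> 1"
  shows "\<exists>\<nu>. \<bar>\<nu>\<bar> \<le> 1 \<and> (\<forall>a\<in>A. \<forall>b\<in>B. \<bar>\<nu> + \<beta> b - \<alpha> a\<bar> \<le> 1)"
proof -
  define pA where "pA \<longleftrightarrow> (\<exists>a\<in>A. \<alpha> a = 1)"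
  define mB where "mB \<longleftrightarrow> (\<exists>b\<in>B. \<beta> b = -1)"
  define \<nu> :: int where "\<nu> = of_bool pA + of_bool mB - 1"
  have "\<bar>\<nu> + \<beta> b - \<alpha> a\<bar> \<le> 1" if a: "a \<in> A" and b: "b \<in> B" for a b
  proof -
    have "\<alpha> a \<noteq> 1 \<Longrightarrow> \<alpha> a \<le> 0" "\<beta> b \<noteq> -1 \<Longrightarrow> 0 \<le> \<beta> b"
      using assms(1)[OF a] assms(3)[OF b] unfolding abs_le_iff by presburger+
    then have "\<not> pA \<Longrightarrow> \<alpha> a \<le> 0" "\<not> mB \<Longrightarrow> 0 \<le> \<beta> b"
      using a b unfolding pA_def mB_def by blast+
    moreover have "pA \<Longrightarrow> 0 \<le> \<alpha> a" "mB \<Longrightarrow> \<beta> b \<le> 0"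
      using assms(2)[OF a] assms(4)[OF b] unfolding pA_def mB_def abs_le_iff by force+
    ultimately show ?thesis
      using assms(1)[OF a] assms(3)[OF b] unfolding \<nu>_def abs_le_iff by (cases pA; cases mB) auto
  qed
  moreover have "\<bar>\<nu>\<bar> \<le> 1" unfolding \<nu>_def by (cases pA; cases mB) auto
  ultimately show ?thesis by blast
qed

lemma exists_block_dvd:
  assumes "0 < k" "k \<le> t"
  obtains h where "0 < h" "int k dvd X + (\<Sum>i\<in>{t<..t + h}. digit_base i)"
proof -
  define h where "h = nat (int k - X mod int k)"
  have "0 \<le> X mod int k" "X mod int k < int k" using assms(1) by simp_all
  then have h: "0 < h" "int h = int k - X mod int k" unfolding h_def by auto
  have "int k dvd (\<Sum>i\<in>{t<..t + h}. digit_base i - 1)"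
    using assms by (intro dvd_sum dvd_digit_base_minus_1) auto
  moreover have "X + int h = int k + int k * (X div int k)"
    using h(2) minus_mod_eq_mult_div[of X "int k"] by simp
  then have "int k dvd X + int h" by simp
  ultimately have "int k dvd X + int h + (\<Sum>i\<in>{t<..t + h}. digit_base i - 1)" by simp
  then show ?thesis using h(1) that by (simp add: sum_subtractf)
qed

text \<open>The block length \<open>h\<close> is tuned for divisibility and the sign \<open>\<epsilon>\<close> to avoid a given
  admissible set.\<close>

definition extend_digits :: "(nat \<Rightarrow> int) \<Rightarrow> nat \<Rightarrow> int \<Rightarrow> nat \<Rightarrow> nat \<Rightarrow> int" where
  "extend_digits e t \<epsilon> h i = e i + (if i = t then \<epsilon> else 0) + (if t < i \<and> i \<le> t + h then 1 else 0)"

lemma sum_extend_digits: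
  assumes "\<And>i. K \<le> i \<Longrightarrow> e i = 0" "K \<le> t"
  shows "(\<Sum>i<Suc (t + h). extend_digits e t \<epsilon> h i * digit_base i) =
           (\<Sum>i<K. e i * digit_base i) + \<epsilon> * digit_base t + (\<Sum>i\<in>{t<..t + h}. digit_base i)"
proof -
  have "(\<Sum>i<Suc (t + h). e i * digit_base i) = (\<Sum>i<K. e i * digit_base i)"
    using assms by (intro sum_lessThan_eq_of_zero_above) auto
  moreover have "(\<Sum>i<Suc (t + h). (if i = t then \<epsilon> else 0) * digit_base i) =
      (\<Sum>i<Suc (t + h). if i = t then \<epsilon> * digit_base i else 0)"
    by (intro sum.cong) auto
  moreover have "\<dots> = \<epsilon> * digit_base t" by (subst sum.delta) auto
  moreover have "(\<Sum>i<Suc (t + h). (if t < i \<and> i \<le> t + h then 1 else 0) * digit_base i) =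
      (\<Sum>i<Suc (t + h). if t < i \<and> i \<le> t + h then digit_base i else 0)"
    by (intro sum.cong) auto
  moreover have "\<dots> = (\<Sum>i\<in>{i\<in>{..<Suc (t + h)}. t < i \<and> i \<le> t + h}. digit_base i)"
    by (rule sum.inter_filter[symmetric]) simp
  moreover have "{i\<in>{..<Suc (t + h)}. t < i \<and> i \<le> t + h} = {t<..t + h}" by auto
  ultimately show ?thesis by (simp add: extend_digits_def distrib_right sum.distrib)
qed

lemma balanced_expansion_extend_digits:
  assumes "\<And>i. \<bar>e i\<bar> \<le> 1" "\<And>i. K \<le> i \<Longrightarrow> e i = 0" "K \<le> t" "\<bar>\<epsilon>\<bar> = 1" "0 < h"
  defines "x \<equiv> \<Sum>i<Suc (t + h). extend_digits e t \<epsilon> h i * digit_base i"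
  shows "balanced_expansion (extend_digits e t \<epsilon> h) x" and "digit_base t < 2 * x"
proof -
  have digit: "\<bar>extend_digits e t \<epsilon> h i\<bar> \<le> 1" for i
    using assms(1)[of i] assms(2)[of i] assms(3,4) unfolding extend_digits_def by (cases "i < K") auto
  have zero: "extend_digits e t \<epsilon> h i = 0" if "Suc (t + h) \<le> i" for i
    using that assms(2,3) unfolding extend_digits_def by auto
  show "balanced_expansion (extend_digits e t \<epsilon> h) x"
    unfolding x_def by (rule balanced_expansionI[OF digit zero]) auto
  have "extend_digits e t \<epsilon> h (t + h) = 1" using assms(2,3,5) unfolding extend_digits_def by auto
  then have "digit_base (t + h) < 2 * x"
    unfolding x_def
  proof (intro digit_base_less_top_digit_sum)
    show "\<bar>extend_digits e t \<epsilon> h i\<bar> \<le> 4" for i using digit[of i] by linarith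
  qed
  moreover have "digit_base t \<le> digit_base (t + h)" by (simp add: mono_digit_base monoD)
  ultimately show "digit_base t < 2 * x" by simp
qed

lemma balanced_expansion_eventually_0:
  "balanced_expansion e x \<Longrightarrow> eventually (\<lambda>i. e i = 0) sequentially"
  using balanced_expansion_support eventually_sequentially by blast

lemma exists_compensating_digits:
  assumes "finite A" "\<And>a. a \<in> A \<Longrightarrow> balanced_expansion (\<alpha> a) (x a)"
    and "\<And>a a' i. a \<in> A \<Longrightarrow> a' \<in> A \<Longrightarrow> \<bar>\<alpha> a i - \<alpha> a' i\<bar> \<le> 1"
    and "finite B" "\<And>b. b \<in> B \<Longrightarrow> balanced_expansion (\<beta> b) (y b)"
    and "\<And>b b' i. b \<in> B \<Longrightarrow> b' \<in> B \<Longrightarrow> \<bar>\<beta> b i - \<beta> b' i\<bar> \<le> 1"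
  obtains K \<nu> where "\<And>a i. a \<in> A \<Longrightarrow> K \<le> i \<Longrightarrow> \<alpha> a i = 0" "\<And>b i. b \<in> B \<Longrightarrow> K \<le> i \<Longrightarrow> \<beta> b i = 0"
    and "\<And>i. \<bar>\<nu> i\<bar> \<le> 1" "\<And>i. K \<le> i \<Longrightarrow> \<nu> i = 0"
    and "\<And>a b i. a \<in> A \<Longrightarrow> b \<in> B \<Longrightarrow> \<bar>\<nu> i + \<beta> b i - \<alpha> a i\<bar> \<le> 1"
proof -
  have "eventually (\<lambda>i. \<forall>a\<in>A. \<alpha> a i = 0) sequentially"
    using assms(1,2) by (intro eventually_ball_finite) (auto intro: balanced_expansion_eventually_0)
  moreover have "eventually (\<lambda>i. \<forall>b\<in>B. \<beta> b i = 0) sequentially"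
    using assms(4,5) by (intro eventually_ball_finite) (auto intro: balanced_expansion_eventually_0)
  ultimately have "eventually (\<lambda>i. (\<forall>a\<in>A. \<alpha> a i = 0) \<and> (\<forall>b\<in>B. \<beta> b i = 0)) sequentially"
    by (rule eventually_conj)
  then obtain K where K: "\<And>a i. a \<in> A \<Longrightarrow> K \<le> i \<Longrightarrow> \<alpha> a i = 0" "\<And>b i. b \<in> B \<Longrightarrow> K \<le> i \<Longrightarrow> \<beta> b i = 0"
    unfolding eventually_sequentially by blast
  have "\<exists>\<nu>. \<bar>\<nu>\<bar> \<le> 1 \<and> (\<forall>a\<in>A. \<forall>b\<in>B. \<bar>\<nu> + \<beta> b i - \<alpha> a i\<bar> \<le> 1)" for i
    using assms balanced_expansion_digit by (intro exists_compensating_digit) blast+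
  then obtain \<nu> where \<nu>: "\<And>i. \<bar>\<nu> i\<bar> \<le> 1" "\<And>a b i. a \<in> A \<Longrightarrow> b \<in> B \<Longrightarrow> \<bar>\<nu> i + \<beta> b i - \<alpha> a i\<bar> \<le> 1"
    by metis
  show ?thesis
    by (rule that[of K "\<lambda>i. if i < K then \<nu> i else 0"]) (use K \<nu> in auto)
qed

lemma exists_sign_avoiding:
  fixes \<sigma> :: "'a \<Rightarrow> int"
  assumes "\<And>s s'. s \<in> S \<Longrightarrow> s' \<in> S \<Longrightarrow> \<bar>\<sigma> s - \<sigma> s'\<bar> \<le> 1"
  obtains \<epsilon> where "\<bar>\<epsilon>\<bar> = 1" "\<And>s. s \<in> S \<Longrightarrow> \<sigma> s \<noteq> \<epsilon>"
proof (cases "\<exists>s\<in>S. \<sigma> s = 1")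
  case True
  then obtain s' where "s' \<in> S" "\<sigma> s' = 1" by blast
  then have "\<sigma> s \<noteq> -1" if "s \<in> S" for s using assms[OF that, of s'] by auto
  then show thesis using that[of "-1"] by simp
qed (use that[of 1] in auto)

lemma translate_in_balanced_set:
  assumes "balanced_expansion \<alpha> (int a - int a0)" "balanced_expansion \<beta> (int b - int b0)"
    and "\<And>i. \<bar>\<nu> i + \<beta> i - \<alpha> i\<bar> \<le> 1"
    and "\<And>i. K \<le> i \<Longrightarrow> \<nu> i = 0" "\<And>i. K \<le> i \<Longrightarrow> \<alpha> i = 0" "\<And>i. K \<le> i \<Longrightarrow> \<beta> i = 0"
    and "K \<le> t" "\<bar>\<epsilon>\<bar> = 1" "0 < h"
    and N: "int N = int a0 - int b0 + (\<Sum>i<Suc (t + h). extend_digits \<nu> t \<epsilon> h i * digit_base i)"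
  shows "N + b - a \<in> balanced_set"
proof -
  define w where "w i = \<nu> i + \<beta> i - \<alpha> i" for i
  have "balanced_expansion (extend_digits w t \<epsilon> h) (\<Sum>i<Suc (t + h). extend_digits w t \<epsilon> h i * digit_base i)"
    and pos: "digit_base t < 2 * (\<Sum>i<Suc (t + h). extend_digits w t \<epsilon> h i * digit_base i)"
    using assms(3-9) unfolding w_def by (intro balanced_expansion_extend_digits[of _ K]; auto)+
  moreover have "(\<Sum>i<K. w i * digit_base i)
      = (\<Sum>i<K. \<nu> i * digit_base i) + (int b - int b0) - (int a - int a0)"
    using balanced_expansion_value[OF assms(1,5)] balanced_expansion_value[OF assms(2,6)]
    unfolding w_def by (simp add: algebra_simps sum.distrib sum_subtractf)
  then have "(\<Sum>i<Suc (t + h). extend_digits w t \<epsilon> h i * digit_base i) = int N + int b - int a"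
    using sum_extend_digits[where K = K and t = t] assms(4-7) N unfolding w_def by simp
  ultimately show ?thesis
    using digit_base_ge[of t] unfolding balanced_set_def by auto
qed

lemma translate_balanced_spacing_nonempty:
  assumes A: "finite A" "A \<noteq> {}" "spacing balanced_set A"
    and B: "finite B" "B \<noteq> {}" "spacing balanced_set B"
    and S: "spacing balanced_set S" and k: "0 < k"
  shows "\<exists>N\<ge>M. k dvd N \<and> (\<forall>a\<in>A. \<forall>b\<in>B. N + b - a \<in> balanced_set) \<and> (\<forall>j\<le>L. N + j \<notin> S)"
proof -
  define a0 b0 where "a0 = Min A" and "b0 = Min B"
  obtain \<alpha> where \<alpha>: "\<And>a. a \<in> A \<Longrightarrow> balanced_expansion (\<alpha> a) (int a - int a0)"
    and \<alpha>_close: "\<And>a a' i. a \<in> A \<Longrightarrow> a' \<in> A \<Longrightarrow> \<bar>\<alpha> a i - \<alpha> a' i\<bar> \<le> 1"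
    using spacing_balanced_expansions[OF A(3), of a0] A(1,2) unfolding a0_def by auto
  obtain \<beta> where \<beta>: "\<And>b. b \<in> B \<Longrightarrow> balanced_expansion (\<beta> b) (int b - int b0)"
    and \<beta>_close: "\<And>b b' i. b \<in> B \<Longrightarrow> b' \<in> B \<Longrightarrow> \<bar>\<beta> b i - \<beta> b' i\<bar> \<le> 1"
    using spacing_balanced_expansions[OF B(3), of b0] B(1,2) unfolding b0_def by auto
  obtain K \<nu> where K: "\<And>a i. a \<in> A \<Longrightarrow> K \<le> i \<Longrightarrow> \<alpha> a i = 0" "\<And>b i. b \<in> B \<Longrightarrow> K \<le> i \<Longrightarrow> \<beta> b i = 0"
    and \<nu>: "\<And>i. \<bar>\<nu> i\<bar> \<le> 1" "\<And>i. K \<le> i \<Longrightarrow> \<nu> i = 0"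
    and \<nu>_compensates: "\<And>a b i. a \<in> A \<Longrightarrow> b \<in> B \<Longrightarrow> \<bar>\<nu> i + \<beta> b i - \<alpha> a i\<bar> \<le> 1"
    using exists_compensating_digits[where \<alpha> = \<alpha> and \<beta> = \<beta>, OF A(1) \<alpha> \<alpha>_close B(1) \<beta> \<beta>_close]
    by blast
  define s0 where "s0 = (LEAST s. s \<in> S)"
  obtain \<sigma> where \<sigma>: "\<And>s. s \<in> S \<Longrightarrow> balanced_expansion (\<sigma> s) (int s - int s0)"
    and \<sigma>_close: "\<And>s s' i. s \<in> S \<Longrightarrow> s' \<in> S \<Longrightarrow> \<bar>\<sigma> s i - \<sigma> s' i\<bar> \<le> 1"
  proof (cases "S = {}")
    case False
    then have "s0 \<in> S" "\<And>s. s \<in> S \<Longrightarrow> s0 \<le> s" unfolding s0_def by (auto intro: LeastI Least_le)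
    then show thesis using spacing_balanced_expansions[OF S] that by blast
  qed (use that in blast)
  define R where "R = \<bar>int a0 - int b0\<bar> + int L + int s0 + int M"
  define t where "t = K + k + nat (2 * R)"
  have "0 \<le> R" unfolding R_def by simp
  then have t: "K \<le> t" "k \<le> t" "2 * R < digit_base t"
    using of_nat_less_digit_base[of t] unfolding t_def by auto
  obtain \<epsilon> where \<epsilon>: "\<bar>\<epsilon>\<bar> = 1" "\<And>s. s \<in> S \<Longrightarrow> \<sigma> s t \<noteq> \<epsilon>"
    using exists_sign_avoiding[of S "\<lambda>s. \<sigma> s t"] \<sigma>_close by blast
  obtain h where h: "0 < h" "int k dvd int a0 - int b0 + ((\<Sum>i<K. \<nu> i * digit_base i) + \<epsilon> * digit_base t
      + (\<Sum>i\<in>{t<..t + h}. digit_base i))"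
    using exists_block_dvd[OF k t(2)] by (metis add.assoc)
  define x where "x = (\<Sum>i<Suc (t + h). extend_digits \<nu> t \<epsilon> h i * digit_base i)"
  have x: "balanced_expansion (extend_digits \<nu> t \<epsilon> h) x" "digit_base t < 2 * x"
    unfolding x_def using \<nu> t(1) \<epsilon>(1) h(1)
    by (intro balanced_expansion_extend_digits[of _ K]; auto)+
  define N where "N = nat (int a0 - int b0 + x)"
  have x_large: "int M + \<bar>int a0 - int b0\<bar> < x"
    using x(2) t(3) unfolding R_def by simp
  then have N: "int N = int a0 - int b0 + x" unfolding N_def by simp
  show ?thesis
  proof (intro exI conjI ballI allI impI)
    show "M \<le> N" using N x_large by simp
    show "k dvd N"
      using h(2) N sum_extend_digits[OF \<nu>(2) t(1)] unfolding x_def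
      by (simp flip: int_dvd_int_iff)
  next
    fix a b assume "a \<in> A" "b \<in> B"
    then show "N + b - a \<in> balanced_set"
      using N t(1) \<epsilon>(1) h(1) \<nu>(2) K unfolding x_def
      by (intro translate_in_balanced_set[OF \<alpha> \<beta> \<nu>_compensates]) auto
  next
    fix j assume "j \<le> L"
    show "N + j \<notin> S"
    proof
      assume s: "N + j \<in> S"
      have eq: "(int (N + j) - int s0) - x = (int a0 - int b0) + int j - int s0" using N by simp
      have "\<bar>int a0 - int b0 + int j - int s0\<bar> \<le> \<bar>int a0 - int b0\<bar> + int L + int s0"
        using \<open>j \<le> L\<close> by linarith
      moreover have "0 \<le> int M" by simp
      ultimately have "2 * \<bar>(int (N + j) - int s0) - x\<bar> < digit_base t"
        using t(3) unfolding eq R_def by simp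
      then have "\<sigma> (N + j) t = extend_digits \<nu> t \<epsilon> h t"
        by (rule balanced_expansions_agree[OF \<sigma>[OF s] x(1)])
      then show False using \<epsilon>(2)[OF s] \<nu>(2)[OF t(1)] unfolding extend_digits_def by simp
    qed
  qed
qed

lemma translate_balanced_spacing:
  assumes "finite A" "spacing balanced_set A" "finite B" "spacing balanced_set B"
    and "spacing balanced_set S" "0 < k"
  shows "\<exists>N\<ge>M. k dvd N \<and> (\<forall>a\<in>A. \<forall>b\<in>B. N + b - a \<in> balanced_set) \<and> (\<forall>j\<le>L. N + j \<notin> S)"
proof -
  define A' where "A' = (if A = {} then {0} else A)"
  define B' where "B' = (if B = {} then {0} else B)"
  have "finite A'" "A' \<noteq> {}" "spacing balanced_set A'" "finite B'" "B' \<noteq> {}" "spacing balanced_set B'"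
    using assms unfolding A'_def B'_def by auto
  moreover have "A \<subseteq> A'" "B \<subseteq> B'" unfolding A'_def B'_def by auto
  ultimately show ?thesis
    using translate_balanced_spacing_nonempty[of A' B' S k M L] assms(5,6) by blast
qed

interpretation balanced_shift: rich_spacing_shift balanced_set
  by unfold_locales (rule translate_balanced_spacing)

theorem theorem6p1:
  shows "\<exists>(X :: real set) (d :: real \<Rightarrow> real \<Rightarrow> real) (T :: real \<Rightarrow> real).
           dyn_system X d T \<and>
           totally_transitive (Metric_space.mtopology X d) T \<and>
           transitive_compact (Metric_space.mtopology X d) T \<and>
           \<not> weakly_mixing (Metric_space.mtopology X d) T"
proof (intro exI conjI)
  show "dyn_system balanced_shift.shift_space cantor_dist set_shift"
    by (rule balanced_shift.dyn_system_set_shift)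
  show "totally_transitive balanced_shift.mtopology set_shift"
    by (rule balanced_shift.totally_transitive_set_shift)
  show "transitive_compact balanced_shift.mtopology set_shift"
    by (rule balanced_shift.transitive_compact_set_shift)
  show "\<not> weakly_mixing balanced_shift.mtopology set_shift"
    using one_notin_balanced_set Suc_notin_balanced_set
    by (rule balanced_shift.not_weakly_mixing_set_shift)
qed

end
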